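(* Let $(C,0)\subset\mathbb{A}^n$ be a homogeneous reduced curve singularity (the cone over a finite set of points in $\mathbb{P}^{n-1}$, all coordinates of weight $1$), with graded coordinate ring $\mathcal{O}$ and graded total ring of fractions $K$. For every integer $\ell$, if $K_{\ell+1}=\mathcal{O}_{\ell+1}$ then $T^1_\ell=0$. In particular, if $C=L_r^n$ is the cone over $r$ points of $\mathbb{P}^{n-1}$ in general position and $d$ is the integer with $\binom{n+d-2}{d-1}<r\le\binom{n+d-1}{d}$, then $T^1_\ell=0$ for all $\ell\ge d-1$.
   Context: The ground field $\k$ is algebraically closed of characteristic $0$. For a cone $C$ over $r$ points, $K\cong\prod_{i=1}^r\k[t_i,t_i^{-1}]$ graded by $\deg t_i=1$, and $\mathcal{O}=\k[x_1,\dots,x_n]/I\subset K$ with $I$ homogeneous. $T^1=T^1(C,0)=\operatorname{Coker}\big(\Theta_n\otimes\mathcal{O}\to\operatorname{Hom}_{\mathcal{O}_n}(I,\mathcal{O})\big)$, where $\Theta_n\otimes\mathcal{O}$ is the free module on $\partial/\partial x_i$; it is graded, $T^1_\ell$ being the image of homomorphisms sending each homogeneous generator of $I$ of degree $q$ to an element of degree $q+\ell$ (so $\ell<0$ corresponds to deformations of negative weight). A point set in $\mathbb{P}^{n-1}$ of $r$ points is in general position if for every $\ell\ge1$ it imposes $\min(r,\binom{n+\ell-1}{\ell})$ independent conditions on forms of degree $\ell$. *)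

theory Defs
  imports "HOL-Library.Poly_Mapping" "HOL-Library.Function_Algebras" "HOL-Computational_Algebra.Polynomial"
begin

text \<open>A monomial in the variables x_0, x_1, ... is an exponent vector nat =>0 nat;
a polynomial is a finitely supported map from monomials to coefficients.\<close>

type_synonym 'k mpoly = "(nat \<Rightarrow>\<^sub>0 nat) \<Rightarrow>\<^sub>0 'k"

definition mdeg :: "(nat \<Rightarrow>\<^sub>0 nat) \<Rightarrow> nat" where
  "mdeg m = (\<Sum>j\<in>Poly_Mapping.keys m. Poly_Mapping.lookup m j)"

definition polys :: "nat \<Rightarrow> 'k::comm_ring_1 mpoly set" where
  "polys n = {f. \<forall>m\<in>Poly_Mapping.keys f. Poly_Mapping.keys m \<subseteq> {..<n}}"

text \<open>Homogeneous of (integer) degree q; the zero polynomial is homogeneous of every degree.\<close>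
definition homog :: "int \<Rightarrow> 'k::comm_ring_1 mpoly \<Rightarrow> bool" where
  "homog q f \<longleftrightarrow> (\<forall>m\<in>Poly_Mapping.keys f. int (mdeg m) = q)"

definition hcomp :: "nat \<Rightarrow> 'k::comm_ring_1 mpoly \<Rightarrow> 'k mpoly" where
  "hcomp e f = (\<Sum>m\<in>{m\<in>Poly_Mapping.keys f. mdeg m = e}. Poly_Mapping.single m (Poly_Mapping.lookup f m))"

definition peval :: "'k::comm_ring_1 mpoly \<Rightarrow> (nat \<Rightarrow> 'k) \<Rightarrow> 'k" where
  "peval f x = (\<Sum>m\<in>Poly_Mapping.keys f. Poly_Mapping.lookup f m * (\<Prod>j\<in>Poly_Mapping.keys m. x j ^ Poly_Mapping.lookup m j))"

definition pderiv_var :: "nat \<Rightarrow> 'k::comm_ring_1 mpoly \<Rightarrow> 'k mpoly" where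
  "pderiv_var j f = (\<Sum>m\<in>Poly_Mapping.keys f.
      Poly_Mapping.single (m - Poly_Mapping.single j 1) (of_nat (Poly_Mapping.lookup m j) * Poly_Mapping.lookup f m))"

text \<open>The points are given by representatives P 0, ..., P (r-1) in k^n (coordinates j < n).
The cone C is the union of the lines through them; its (reduced) ideal I consists of
the polynomials vanishing on C.\<close>

definition cone_ideal :: "nat \<Rightarrow> nat \<Rightarrow> (nat \<Rightarrow> nat \<Rightarrow> 'k::comm_ring_1) \<Rightarrow> 'k mpoly set" where
  "cone_ideal n r P = {f \<in> polys n. \<forall>i<r. \<forall>t. peval f (\<lambda>j. t * P i j) = 0}"

text \<open>Total ring of fractions K = prod_{i<r} k[t_i, t_i^{-1}], an element being encoded by
its coefficient function (i, e) |-> coefficient of t_i^e (finitely supported, i < r).\<close>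

definition K_deg :: "nat \<Rightarrow> int \<Rightarrow> (nat \<Rightarrow> int \<Rightarrow> 'k::comm_ring_1) set" where
  "K_deg r m = {c. \<forall>i e. c i e \<noteq> 0 \<longrightarrow> i < r \<and> e = m}"

text \<open>The embedding O = k[x]/I into K, x_j |-> (P i j * t_i)_i.\<close>
definition embK :: "nat \<Rightarrow> (nat \<Rightarrow> nat \<Rightarrow> 'k::comm_ring_1) \<Rightarrow> 'k mpoly \<Rightarrow> nat \<Rightarrow> int \<Rightarrow> 'k" where
  "embK r P f = (\<lambda>i e. if i < r \<and> 0 \<le> e then peval (hcomp (nat e) f) (P i) else 0)"

definition O_deg :: "nat \<Rightarrow> nat \<Rightarrow> (nat \<Rightarrow> nat \<Rightarrow> 'k::comm_ring_1) \<Rightarrow> int \<Rightarrow> (nat \<Rightarrow> int \<Rightarrow> 'k) set" where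
  "O_deg n r P m = (embK r P ` polys n) \<inter> K_deg r m"

text \<open>Elements of O are represented by polynomials modulo I. A homomorphism of O_n-modules
I -> O is represented by a map phi from I to polynomials, additive and O_n-linear modulo I.\<close>

definition graded_hom :: "nat \<Rightarrow> 'k::comm_ring_1 mpoly set \<Rightarrow> int \<Rightarrow> ('k mpoly \<Rightarrow> 'k mpoly) \<Rightarrow> bool" where
  "graded_hom n I l \<phi> \<longleftrightarrow>
     (\<forall>f\<in>I. \<phi> f \<in> polys n) \<and>
     (\<forall>f\<in>I. \<forall>g\<in>I. \<phi> (f + g) - (\<phi> f + \<phi> g) \<in> I) \<and>
     (\<forall>h\<in>polys n. \<forall>f\<in>I. \<phi> (h * f) - h * \<phi> f \<in> I) \<and>
     (\<forall>q. \<forall>f\<in>I. homog q f \<longrightarrow> (\<exists>g\<in>polys n. homog (q + l) g \<and> \<phi> f - g \<in> I))"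

text \<open>Image of (Theta_n (x) O)_l: the homomorphisms f |-> sum_j a_j * df/dx_j with a_j in O_{l+1}.\<close>
definition derivation_hom :: "nat \<Rightarrow> 'k::comm_ring_1 mpoly set \<Rightarrow> int \<Rightarrow> ('k mpoly \<Rightarrow> 'k mpoly) \<Rightarrow> bool" where
  "derivation_hom n I l \<phi> \<longleftrightarrow>
     (\<exists>a. (\<forall>j<n. a j \<in> polys n \<and> homog (l + 1) (a j)) \<and>
          (\<forall>f\<in>I. \<phi> f - (\<Sum>j<n. a j * pderiv_var j f) \<in> I))"

text \<open>T^1_l = 0: every graded homomorphism of degree l lies in the image of Theta_n (x) O.\<close>
definition T1_vanishes :: "nat \<Rightarrow> 'k::comm_ring_1 mpoly set \<Rightarrow> int \<Rightarrow> bool" where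
  "T1_vanishes n I l \<longleftrightarrow> (\<forall>\<phi>. graded_hom n I l \<phi> \<longrightarrow> derivation_hom n I l \<phi>)"

text \<open>Number of independent conditions the points impose on forms of degree l:
the dimension of the image of the evaluation map from forms of degree l to k^r.\<close>
definition eval_vectors :: "nat \<Rightarrow> nat \<Rightarrow> (nat \<Rightarrow> nat \<Rightarrow> 'k::field) \<Rightarrow> nat \<Rightarrow> (nat \<Rightarrow> 'k) set" where
  "eval_vectors n r P l =
     {(\<lambda>i. if i < r then peval f (P i) else 0) | f. f \<in> polys n \<and> homog (int l) f}"

definition conditions_imposed :: "nat \<Rightarrow> nat \<Rightarrow> (nat \<Rightarrow> nat \<Rightarrow> 'k::field) \<Rightarrow> nat \<Rightarrow> nat" where
  "conditions_imposed n r P l =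
     vector_space.dim (\<lambda>c (v :: nat \<Rightarrow> 'k). (\<lambda>i. c * v i)) (eval_vectors n r P l)"

definition general_position :: "nat \<Rightarrow> nat \<Rightarrow> (nat \<Rightarrow> nat \<Rightarrow> 'k::field) \<Rightarrow> bool" where
  "general_position n r P \<longleftrightarrow>
     (\<forall>l\<ge>1. conditions_imposed n r P l = min r ((n + l - 1) choose l))"

text \<open>r distinct points of P^{n-1}: nonzero representatives, pairwise non-proportional.\<close>
definition proj_points :: "nat \<Rightarrow> nat \<Rightarrow> (nat \<Rightarrow> nat \<Rightarrow> 'k::field) \<Rightarrow> bool" where
  "proj_points n r P \<longleftrightarrow>
     (\<forall>i<r. \<exists>j<n. P i j \<noteq> 0) \<and>
     (\<forall>i<r. \<forall>i'<r. i \<noteq> i' \<longrightarrow> \<not> (\<exists>c. \<forall>j<n. P i j = c * P i' j))"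

end

theory Submission
  imports Defs
begin

text \<open>
  Let \<open>\<phi> : I \<rightarrow> O\<close> be homogeneous of degree \<open>l\<close> and \<open>p = P i\<close> a point with \<open>p\<^sub>z \<noteq> 0\<close>. Pick a
  form \<open>u\<close> vanishing on every line of the cone except the one through \<open>p\<close>, with \<open>u(p) \<noteq> 0\<close>.
  A homogeneous \<open>f \<in> I\<close> vanishes at \<open>p\<close>, so \<open>f = \<Sum>\<^sub>k b\<^sub>k L\<^sub>k\<close> with \<open>L\<^sub>k = p\<^sub>z x\<^sub>k - p\<^sub>k x\<^sub>z\<close>. As
  \<open>u L\<^sub>k \<in> I\<close>, linearity gives \<open>u(p) \<phi>(f)(p) = \<Sum>\<^sub>k b\<^sub>k(p) \<phi>(u L\<^sub>k)(p)\<close>, while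
  \<open>\<partial>\<^sub>j f(p) = \<Sum>\<^sub>k b\<^sub>k(p) \<partial>\<^sub>j L\<^sub>k(p)\<close>. Hence \<open>\<phi>(f)(p) = \<Sum>\<^sub>j v\<^sub>i\<^sub>j \<partial>\<^sub>j f(p)\<close> for a vector \<open>v\<^sub>i\<close> not
  depending on \<open>f\<close>: at each point, \<open>\<phi>\<close> is a derivation.

  For each \<open>j\<close>, the values \<open>(v\<^sub>i\<^sub>j)\<^sub>i\<close> form an element of \<open>K\<close> of degree \<open>l + 1\<close>. If it lies in \<open>O\<close>,
  it is the vector of values of a form \<open>a\<^sub>j\<close> of degree \<open>l + 1\<close>, and then \<open>\<phi>(f) - \<Sum>\<^sub>j a\<^sub>j \<partial>\<^sub>j f\<close>
  is, for homogeneous \<open>f\<close>, a form vanishing at all points, i.e. zero in \<open>O\<close>. For points in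
  general position with \<open>r \<le> binom(n + d - 1, d)\<close>, forms of every degree \<open>\<ge> d\<close> take
  arbitrary values at the points, which says exactly that \<open>K\<^sub>l\<^sub>+\<^sub>1 = O\<^sub>l\<^sub>+\<^sub>1\<close> for \<open>l \<ge> d - 1\<close>.
\<close>

definition mon_eval :: "(nat \<Rightarrow>\<^sub>0 nat) \<Rightarrow> (nat \<Rightarrow> 'k::comm_ring_1) \<Rightarrow> 'k" where
  "mon_eval m x = (\<Prod>j\<in>Poly_Mapping.keys m. x j ^ Poly_Mapping.lookup m j)"

lemma mon_eval_superset:
  assumes "finite S" "Poly_Mapping.keys m \<subseteq> S"
  shows "mon_eval m x = (\<Prod>j\<in>S. x j ^ Poly_Mapping.lookup m j)"
  unfolding mon_eval_def
  by (rule prod.mono_neutral_left) (use assms in \<open>auto simp: in_keys_iff\<close>)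

lemma mon_eval_add: "mon_eval (m + m') x = mon_eval m x * mon_eval m' x"
proof -
  let ?S = "Poly_Mapping.keys m \<union> Poly_Mapping.keys m'"
  have "mon_eval (m + m') x = (\<Prod>j\<in>?S. x j ^ Poly_Mapping.lookup (m + m') j)"
    by (rule mon_eval_superset) (auto dest: keys_add[THEN subsetD])
  also have "\<dots> = (\<Prod>j\<in>?S. x j ^ Poly_Mapping.lookup m j)
                  * (\<Prod>j\<in>?S. x j ^ Poly_Mapping.lookup m' j)"
    by (simp add: lookup_add power_add prod.distrib)
  also have "\<dots> = mon_eval m x * mon_eval m' x"
    using mon_eval_superset[of ?S m x] mon_eval_superset[of ?S m' x] by simp
  finally show ?thesis .
qed

lemma mon_eval_zero [simp]: "mon_eval 0 x = 1"
  by (simp add: mon_eval_def)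

lemma mon_eval_single [simp]: "mon_eval (Poly_Mapping.single j k) x = x j ^ k"
  by (cases "k = 0") (simp_all add: mon_eval_def)

lemma mon_eval_scale: "mon_eval m (\<lambda>j. t * x j) = t ^ mdeg m * mon_eval m x"
  by (simp add: mon_eval_def mdeg_def power_mult_distrib prod.distrib power_sum)

lemma peval_conv_mon_eval:
  "peval f x = (\<Sum>m\<in>Poly_Mapping.keys f. Poly_Mapping.lookup f m * mon_eval m x)"
  by (simp add: peval_def mon_eval_def)

lemma peval_superset:
  assumes "finite S" "Poly_Mapping.keys f \<subseteq> S"
  shows "peval f x = (\<Sum>m\<in>S. Poly_Mapping.lookup f m * mon_eval m x)"
  unfolding peval_conv_mon_eval
  by (rule sum.mono_neutral_left) (use assms in \<open>auto simp: in_keys_iff\<close>)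

lemma peval_add: "peval (f + g) x = peval f x + peval g x"
proof -
  let ?S = "Poly_Mapping.keys f \<union> Poly_Mapping.keys g"
  have "peval (f + g) x = (\<Sum>m\<in>?S. Poly_Mapping.lookup (f + g) m * mon_eval m x)"
    by (rule peval_superset) (auto dest: keys_add[THEN subsetD])
  also have "\<dots> = peval f x + peval g x"
    by (simp add: lookup_add distrib_right sum.distrib peval_superset[of ?S])
  finally show ?thesis .
qed

lemma peval_zero [simp]: "peval 0 x = 0"
  by (simp add: peval_def)

lemma peval_uminus: "peval (- f) x = - peval f x"
  using peval_add[of f "- f" x] by (simp add: add_eq_0_iff)

lemma peval_diff: "peval (f - g) x = peval f x - peval g x"
  using peval_add[of f "- g" x] by (simp add: peval_uminus)

lemma peval_sum: "peval (\<Sum>a\<in>A. F a) x = (\<Sum>a\<in>A. peval (F a) x)"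
  by (induction A rule: infinite_finite_induct) (auto simp: peval_add)

lemma peval_single: "peval (Poly_Mapping.single m c) x = c * mon_eval m x"
  by (simp add: peval_conv_mon_eval)

lemma sum_single_lookup:
  "(\<Sum>m\<in>Poly_Mapping.keys f. Poly_Mapping.single m (Poly_Mapping.lookup f m)) = f"
  by (rule poly_mapping_eqI) (auto simp: lookup_sum lookup_single when_def in_keys_iff sum.delta)

lemma peval_single_mult:
  "peval (Poly_Mapping.single m a * g) x = a * mon_eval m x * peval g x"
proof -
  have "Poly_Mapping.single m a * g
      = (\<Sum>m'\<in>Poly_Mapping.keys g.
           Poly_Mapping.single m a * Poly_Mapping.single m' (Poly_Mapping.lookup g m'))"
    by (subst sum_single_lookup[of g, symmetric]) (simp add: sum_distrib_left)
  then show ?thesis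
    by (simp add: peval_sum mult_single peval_single mon_eval_add peval_conv_mon_eval[of g]
        sum_distrib_left algebra_simps)
qed

lemma peval_mult: "peval (f * g) x = peval f x * peval g x"
proof -
  have "f * g = (\<Sum>m\<in>Poly_Mapping.keys f. Poly_Mapping.single m (Poly_Mapping.lookup f m) * g)"
    by (subst sum_single_lookup[of f, symmetric]) (simp add: sum_distrib_right)
  then show ?thesis
    by (simp add: peval_sum peval_single_mult peval_conv_mon_eval[of f] sum_distrib_right)
qed

lemma peval_one [simp]: "peval 1 x = 1"
  by (simp add: peval_conv_mon_eval)

lemma peval_prod: "peval (\<Prod>a\<in>A. F a) x = (\<Prod>a\<in>A. peval (F a) x)"
  by (induction A rule: infinite_finite_induct) (auto simp: peval_mult)

lemma mdeg_superset:
  assumes "finite S" "Poly_Mapping.keys m \<subseteq> S"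
  shows "mdeg m = (\<Sum>j\<in>S. Poly_Mapping.lookup m j)"
  unfolding mdeg_def
  by (rule sum.mono_neutral_left) (use assms in \<open>auto simp: in_keys_iff\<close>)

lemma mdeg_add: "mdeg (m + m') = mdeg m + mdeg m'"
proof -
  let ?S = "Poly_Mapping.keys m \<union> Poly_Mapping.keys m'"
  have "mdeg (m + m') = (\<Sum>j\<in>?S. Poly_Mapping.lookup (m + m') j)"
    by (rule mdeg_superset) (auto dest: keys_add[THEN subsetD])
  also have "\<dots> = mdeg m + mdeg m'"
    by (simp add: lookup_add sum.distrib mdeg_superset[of ?S])
  finally show ?thesis .
qed

lemma mdeg_zero [simp]: "mdeg 0 = 0"
  by (simp add: mdeg_def)

lemma mdeg_single [simp]: "mdeg (Poly_Mapping.single j k) = k"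
  by (simp add: mdeg_def)

lemma mdeg_eq_0_iff: "mdeg m = 0 \<longleftrightarrow> m = 0"
proof
  assume "mdeg m = 0"
  then have "\<forall>j\<in>Poly_Mapping.keys m. Poly_Mapping.lookup m j = 0"
    by (simp add: mdeg_def)
  then show "m = 0"
    by (metis equals0I in_keys_iff keys_eq_empty)
qed simp

lemma minus_single_plus_single:
  assumes "Poly_Mapping.lookup m j \<ge> 1"
  shows "(m - Poly_Mapping.single j 1) + Poly_Mapping.single j (1::nat) = m"
  by (rule poly_mapping_eqI) (use assms in \<open>auto simp: lookup_add lookup_minus lookup_single when_def\<close>)

lemma mdeg_minus_single:
  assumes "Poly_Mapping.lookup m j \<ge> 1"
  shows "mdeg (m - Poly_Mapping.single j 1) = mdeg m - 1"
  using mdeg_add[of "m - Poly_Mapping.single j 1" "Poly_Mapping.single j 1"]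
  by (metis minus_single_plus_single[OF assms] mdeg_single add_diff_cancel_right')

lemma mon_eval_minus_single:
  assumes "Poly_Mapping.lookup m j \<ge> 1"
  shows "mon_eval m x = mon_eval (m - Poly_Mapping.single j 1) x * x j"
  using mon_eval_add[of "m - Poly_Mapping.single j 1" "Poly_Mapping.single j 1" x]
  by (metis minus_single_plus_single[OF assms] mon_eval_single power_one_right)

lemma mon_eval_plus_minus_single:
  assumes "Poly_Mapping.lookup m j \<ge> 1"
  shows "mon_eval (m + m' - Poly_Mapping.single j 1) x
           = mon_eval (m - Poly_Mapping.single j 1) x * mon_eval m' x"
proof -
  have "m + m' - Poly_Mapping.single j 1 = (m - Poly_Mapping.single j 1) + m'"
    by (rule poly_mapping_eqI) (use assms in \<open>auto simp: lookup_add lookup_minus lookup_single when_def\<close>)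
  then show ?thesis
    by (simp add: mon_eval_add)
qed

lemma polys_zero [simp]: "0 \<in> polys n"
  by (simp add: polys_def)

lemma polys_one [simp]: "1 \<in> polys n"
  by (simp add: polys_def)

lemma polys_add: "f \<in> polys n \<Longrightarrow> g \<in> polys n \<Longrightarrow> f + g \<in> polys n"
  unfolding polys_def using keys_add[of f g] by blast

lemma polys_diff: "f \<in> polys n \<Longrightarrow> g \<in> polys n \<Longrightarrow> f - g \<in> polys n"
  unfolding polys_def using keys_diff[of f g] by blast

lemma polys_single: "Poly_Mapping.keys m \<subseteq> {..<n} \<Longrightarrow> Poly_Mapping.single m c \<in> polys n"
  by (simp add: polys_def)

lemma polys_mult:
  assumes "f \<in> polys n" "g \<in> polys n"
  shows "f * g \<in> polys n"
proof -
  have "Poly_Mapping.keys m \<subseteq> {..<n}" if m: "m \<in> Poly_Mapping.keys (f * g)" for m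
  proof -
    obtain a b where "m = a + b" "a \<in> Poly_Mapping.keys f" "b \<in> Poly_Mapping.keys g"
      using keys_mult m by blast
    then show ?thesis
      using assms keys_add[of a b] unfolding polys_def by blast
  qed
  then show ?thesis
    by (simp add: polys_def)
qed

lemma polys_sum: "(\<And>a. a \<in> A \<Longrightarrow> F a \<in> polys n) \<Longrightarrow> (\<Sum>a\<in>A. F a) \<in> polys n"
  by (induction A rule: infinite_finite_induct) (auto simp: polys_add)

lemma polys_prod: "(\<And>a. a \<in> A \<Longrightarrow> F a \<in> polys n) \<Longrightarrow> (\<Prod>a\<in>A. F a) \<in> polys n"
  by (induction A rule: infinite_finite_induct) (auto simp: polys_mult)

lemma homog_zero [simp]: "homog q 0"
  by (simp add: homog_def)

lemma homog_add: "homog q f \<Longrightarrow> homog q g \<Longrightarrow> homog q (f + g)"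
  unfolding homog_def using keys_add[of f g] by blast

lemma homog_diff: "homog q f \<Longrightarrow> homog q g \<Longrightarrow> homog q (f - g)"
  unfolding homog_def using keys_diff[of f g] by blast

lemma homog_single: "homog (int (mdeg m)) (Poly_Mapping.single m c)"
  by (simp add: homog_def)

lemma homog_sum: "(\<And>a. a \<in> A \<Longrightarrow> homog q (F a)) \<Longrightarrow> homog q (\<Sum>a\<in>A. F a)"
  by (induction A rule: infinite_finite_induct) (auto simp: homog_add)

lemma homog_mult:
  assumes "homog p f" "homog q g"
  shows "homog (p + q) (f * g)"
  unfolding homog_def
proof
  fix m
  assume "m \<in> Poly_Mapping.keys (f * g)"
  then obtain a b where "m = a + b" "a \<in> Poly_Mapping.keys f" "b \<in> Poly_Mapping.keys g"
    using keys_mult by blast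
  then show "int (mdeg m) = p + q"
    using assms by (auto simp: homog_def mdeg_add)
qed

lemma homog_neg_eq_0: "q < 0 \<Longrightarrow> homog q f \<Longrightarrow> f = 0"
  unfolding homog_def by (metis all_not_in_conv keys_eq_empty of_nat_less_0_iff)

lemma peval_homog_scale:
  assumes "homog q f"
  shows "peval f (\<lambda>j. t * x j) = t ^ nat q * peval f x"
proof -
  have "peval f (\<lambda>j. t * x j)
      = (\<Sum>m\<in>Poly_Mapping.keys f. Poly_Mapping.lookup f m * (t ^ nat q * mon_eval m x))"
    unfolding peval_conv_mon_eval mon_eval_scale
    by (rule sum.cong) (use assms in \<open>auto simp: homog_def\<close>)
  then show ?thesis
    by (simp add: peval_conv_mon_eval sum_distrib_left algebra_simps)
qed

lemma lookup_hcomp: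
  "Poly_Mapping.lookup (hcomp e f) m = (if mdeg m = e then Poly_Mapping.lookup f m else 0)"
  unfolding hcomp_def by (auto simp: lookup_sum lookup_single when_def in_keys_iff sum.delta)

lemma hcomp_polys: "f \<in> polys n \<Longrightarrow> hcomp e f \<in> polys n"
  by (auto simp: polys_def in_keys_iff lookup_hcomp split: if_splits)

lemma homog_hcomp: "homog (int e) (hcomp e f)"
  by (auto simp: homog_def in_keys_iff lookup_hcomp split: if_splits)

lemma hcomp_homog: "homog (int e) f \<Longrightarrow> hcomp e f = f"
  by (rule poly_mapping_eqI) (auto simp: lookup_hcomp homog_def in_keys_iff)

lemma hcomp_homog_other: "homog q f \<Longrightarrow> int e \<noteq> q \<Longrightarrow> hcomp e f = 0"
  by (rule poly_mapping_eqI) (auto simp: lookup_hcomp homog_def in_keys_iff)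

lemma sum_hcomp:
  assumes "finite E" "mdeg ` Poly_Mapping.keys f \<subseteq> E"
  shows "(\<Sum>e\<in>E. hcomp e f) = f"
proof (rule poly_mapping_eqI)
  fix m
  have "Poly_Mapping.lookup (\<Sum>e\<in>E. hcomp e f) m
      = (\<Sum>e\<in>E. if mdeg m = e then Poly_Mapping.lookup f m else 0)"
    by (simp add: lookup_sum lookup_hcomp)
  also have "\<dots> = Poly_Mapping.lookup f m"
    using assms by (auto simp: sum.delta in_keys_iff image_subset_iff)
  finally show "Poly_Mapping.lookup (\<Sum>e\<in>E. hcomp e f) m = Poly_Mapping.lookup f m" .
qed

lemma peval_scale_eq_sum_hcomp:
  "peval f (\<lambda>j. t * x j) = (\<Sum>e\<in>mdeg ` Poly_Mapping.keys f. t ^ e * peval (hcomp e f) x)"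
  by (subst sum_hcomp[of "mdeg ` Poly_Mapping.keys f" f, symmetric])
     (simp_all add: peval_sum peval_homog_scale[OF homog_hcomp])

lemma pderiv_var_superset:
  assumes "finite S" "Poly_Mapping.keys f \<subseteq> S"
  shows "pderiv_var j f = (\<Sum>m\<in>S. Poly_Mapping.single (m - Poly_Mapping.single j 1)
                                     (of_nat (Poly_Mapping.lookup m j) * Poly_Mapping.lookup f m))"
  unfolding pderiv_var_def
  by (rule sum.mono_neutral_left) (use assms in \<open>auto simp: in_keys_iff\<close>)

lemma pderiv_var_add: "pderiv_var j (f + g) = pderiv_var j f + pderiv_var j g"
proof -
  let ?S = "Poly_Mapping.keys f \<union> Poly_Mapping.keys g"
  have "pderiv_var j (f + g) = (\<Sum>m\<in>?S. Poly_Mapping.single (m - Poly_Mapping.single j 1)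
                                 (of_nat (Poly_Mapping.lookup m j) * Poly_Mapping.lookup (f + g) m))"
    by (rule pderiv_var_superset) (auto dest: keys_add[THEN subsetD])
  also have "\<dots> = pderiv_var j f + pderiv_var j g"
    by (simp add: lookup_add distrib_left single_add sum.distrib pderiv_var_superset[of ?S])
  finally show ?thesis .
qed

lemma pderiv_var_zero [simp]: "pderiv_var j 0 = 0"
  by (simp add: pderiv_var_def)

lemma pderiv_var_uminus: "pderiv_var j (- f) = - pderiv_var j f"
  using pderiv_var_add[of j f "- f"] by (simp add: add_eq_0_iff)

lemma pderiv_var_diff: "pderiv_var j (f - g) = pderiv_var j f - pderiv_var j g"
  using pderiv_var_add[of j f "- g"] by (simp add: pderiv_var_uminus)

lemma pderiv_var_sum: "pderiv_var j (\<Sum>a\<in>A. F a) = (\<Sum>a\<in>A. pderiv_var j (F a))"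
  by (induction A rule: infinite_finite_induct) (auto simp: pderiv_var_add)

lemma pderiv_var_single:
  "pderiv_var j (Poly_Mapping.single m c)
     = Poly_Mapping.single (m - Poly_Mapping.single j 1) (of_nat (Poly_Mapping.lookup m j) * c)"
  by (cases "c = 0") (simp_all add: pderiv_var_def)

lemma pderiv_var_polys:
  assumes "f \<in> polys n"
  shows "pderiv_var j f \<in> polys n"
  unfolding pderiv_var_def
proof (intro polys_sum polys_single)
  fix m
  assume "m \<in> Poly_Mapping.keys f"
  with assms have "Poly_Mapping.keys m \<subseteq> {..<n}"
    by (auto simp: polys_def)
  moreover have "Poly_Mapping.keys (m - Poly_Mapping.single j 1) \<subseteq> Poly_Mapping.keys m"
    by (auto simp: in_keys_iff lookup_minus)
  ultimately show "Poly_Mapping.keys (m - Poly_Mapping.single j 1) \<subseteq> {..<n}"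
    by blast
qed

lemma homog_pderiv_var:
  assumes "homog q f"
  shows "homog (q - 1) (pderiv_var j f)"
  unfolding pderiv_var_def
proof (intro homog_sum)
  fix m
  assume m: "m \<in> Poly_Mapping.keys f"
  show "homog (q - 1) (Poly_Mapping.single (m - Poly_Mapping.single j 1)
                         (of_nat (Poly_Mapping.lookup m j) * Poly_Mapping.lookup f m))"
  proof (cases "Poly_Mapping.lookup m j = 0")
    case False
    then have "Poly_Mapping.lookup m j \<ge> 1"
      by simp
    then show ?thesis
      using assms m mdeg_minus_single[of m j] mdeg_eq_0_iff[of m]
      by (auto simp: homog_def in_keys_iff)
  qed simp
qed

lemma peval_pderiv_var_single:
  "peval (pderiv_var j (Poly_Mapping.single m c)) x
     = of_nat (Poly_Mapping.lookup m j) * c * mon_eval (m - Poly_Mapping.single j 1) x"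
  by (simp add: pderiv_var_single peval_single)

lemma peval_pderiv_var_single_mult_single:
  "peval (pderiv_var j (Poly_Mapping.single m a * Poly_Mapping.single m' b)) x
     = peval (pderiv_var j (Poly_Mapping.single m a)) x * peval (Poly_Mapping.single m' b) x
       + peval (Poly_Mapping.single m a) x * peval (pderiv_var j (Poly_Mapping.single m' b)) x"
proof -
  let ?x_j = "\<lambda>m. m - Poly_Mapping.single j 1"
  have left: "of_nat (Poly_Mapping.lookup m j) * mon_eval (?x_j (m + m')) x
      = of_nat (Poly_Mapping.lookup m j) * (mon_eval (?x_j m) x * mon_eval m' x)"
    using mon_eval_plus_minus_single[of m j m' x]
    by (cases "Poly_Mapping.lookup m j = 0") simp_all
  have right: "of_nat (Poly_Mapping.lookup m' j) * mon_eval (?x_j (m + m')) x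
      = of_nat (Poly_Mapping.lookup m' j) * (mon_eval m x * mon_eval (?x_j m') x)"
    using mon_eval_plus_minus_single[of m' j m x]
    by (cases "Poly_Mapping.lookup m' j = 0") (simp_all add: add.commute mult.commute)
  have "peval (pderiv_var j (Poly_Mapping.single m a * Poly_Mapping.single m' b)) x
      = a * b * (of_nat (Poly_Mapping.lookup m j) * mon_eval (?x_j (m + m')) x)
        + a * b * (of_nat (Poly_Mapping.lookup m' j) * mon_eval (?x_j (m + m')) x)"
    by (simp add: mult_single peval_pderiv_var_single lookup_add algebra_simps)
  then show ?thesis
    unfolding left right by (simp add: peval_pderiv_var_single peval_single algebra_simps)
qed

lemma peval_pderiv_var_single_mult:
  "peval (pderiv_var j (Poly_Mapping.single m a * g)) x
     = peval (pderiv_var j (Poly_Mapping.single m a)) x * peval g x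
       + peval (Poly_Mapping.single m a) x * peval (pderiv_var j g) x"
proof -
  let ?g = "\<lambda>m'. Poly_Mapping.single m' (Poly_Mapping.lookup g m')"
  have "Poly_Mapping.single m a * g = (\<Sum>m'\<in>Poly_Mapping.keys g. Poly_Mapping.single m a * ?g m')"
    by (subst sum_single_lookup[of g, symmetric]) (simp add: sum_distrib_left)
  moreover have "peval g x = (\<Sum>m'\<in>Poly_Mapping.keys g. peval (?g m') x)"
    by (subst sum_single_lookup[of g, symmetric]) (simp add: peval_sum)
  moreover have "peval (pderiv_var j g) x
      = (\<Sum>m'\<in>Poly_Mapping.keys g. peval (pderiv_var j (?g m')) x)"
    by (subst sum_single_lookup[of g, symmetric]) (simp add: peval_sum pderiv_var_sum)
  ultimately show ?thesis
    by (simp add: pderiv_var_sum peval_sum peval_pderiv_var_single_mult_single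
        sum.distrib sum_distrib_left)
qed

lemma peval_pderiv_var_mult:
  "peval (pderiv_var j (f * g)) x
     = peval (pderiv_var j f) x * peval g x + peval f x * peval (pderiv_var j g) x"
proof -
  let ?f = "\<lambda>m. Poly_Mapping.single m (Poly_Mapping.lookup f m)"
  have "f * g = (\<Sum>m\<in>Poly_Mapping.keys f. ?f m * g)"
    by (subst sum_single_lookup[of f, symmetric]) (simp add: sum_distrib_right)
  moreover have "peval f x = (\<Sum>m\<in>Poly_Mapping.keys f. peval (?f m) x)"
    by (subst sum_single_lookup[of f, symmetric]) (simp add: peval_sum)
  moreover have "peval (pderiv_var j f) x
      = (\<Sum>m\<in>Poly_Mapping.keys f. peval (pderiv_var j (?f m)) x)"
    by (subst sum_single_lookup[of f, symmetric]) (simp add: peval_sum pderiv_var_sum)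
  ultimately show ?thesis
    by (simp add: pderiv_var_sum peval_sum peval_pderiv_var_single_mult
        sum.distrib sum_distrib_right)
qed

section \<open>Forms vanishing at a point\<close>

definition minor_form :: "(nat \<Rightarrow> 'k::comm_ring_1) \<Rightarrow> nat \<Rightarrow> nat \<Rightarrow> 'k mpoly" where
  "minor_form p z k = Poly_Mapping.single (Poly_Mapping.single k 1) (p z)
                      - Poly_Mapping.single (Poly_Mapping.single z 1) (p k)"

definition minor_ideal :: "nat \<Rightarrow> (nat \<Rightarrow> 'k::comm_ring_1) \<Rightarrow> nat \<Rightarrow> 'k mpoly set" where
  "minor_ideal n p z = {(\<Sum>k<n. b k * minor_form p z k) | b. \<forall>k<n. b k \<in> polys n}"

lemma minor_form_polys: "k < n \<Longrightarrow> z < n \<Longrightarrow> minor_form p z k \<in> polys n"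
  unfolding minor_form_def by (intro polys_diff polys_single) auto

lemma peval_minor_form: "peval (minor_form p z k) x = p z * x k - p k * x z"
  by (simp add: minor_form_def peval_diff peval_single)

lemma minor_form_self [simp]: "minor_form p z z = 0"
  by (simp add: minor_form_def)

lemma peval_pderiv_var_minor_form:
  "peval (pderiv_var j (minor_form p z k)) x = (if j = k then p z else 0) - (if j = z then p k else 0)"
  by (simp add: minor_form_def pderiv_var_diff peval_diff pderiv_var_single peval_single
      lookup_single when_def)

lemma minor_ideal_zero [simp]: "0 \<in> minor_ideal n p z"
  unfolding minor_ideal_def by (rule CollectI, rule exI[of _ "\<lambda>_. 0"]) simp

lemma minor_ideal_add:
  assumes "f \<in> minor_ideal n p z" "g \<in> minor_ideal n p z"
  shows "f + g \<in> minor_ideal n p z"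
proof -
  obtain a b where "\<forall>k<n. a k \<in> polys n" "\<forall>k<n. b k \<in> polys n"
    and "f = (\<Sum>k<n. a k * minor_form p z k)" "g = (\<Sum>k<n. b k * minor_form p z k)"
    using assms by (auto simp: minor_ideal_def)
  then show ?thesis
    unfolding minor_ideal_def
    by (intro CollectI exI[of _ "\<lambda>k. a k + b k"]) (simp add: polys_add distrib_right sum.distrib)
qed

lemma minor_ideal_mult:
  assumes "h \<in> polys n" "f \<in> minor_ideal n p z"
  shows "h * f \<in> minor_ideal n p z"
proof -
  obtain b where "\<forall>k<n. b k \<in> polys n" "f = (\<Sum>k<n. b k * minor_form p z k)"
    using assms by (auto simp: minor_ideal_def)
  then show ?thesis
    unfolding minor_ideal_def using assms(1)
    by (intro CollectI exI[of _ "\<lambda>k. h * b k"]) (simp add: polys_mult sum_distrib_left mult.assoc)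
qed

lemma minor_ideal_sum:
  "(\<And>a. a \<in> A \<Longrightarrow> F a \<in> minor_ideal n p z) \<Longrightarrow> (\<Sum>a\<in>A. F a) \<in> minor_ideal n p z"
  by (induction A rule: infinite_finite_induct) (auto intro: minor_ideal_add)

lemma minor_form_in_minor_ideal:
  assumes "k < n"
  shows "minor_form p z k \<in> minor_ideal n p z"
  unfolding minor_ideal_def
proof (intro CollectI exI conjI)
  show "minor_form p z k = (\<Sum>k'<n. (if k' = k then 1 else 0) * minor_form p z k')"
    using assms by (simp add: if_distrib[of "\<lambda>a. a * _"] sum.delta cong: if_cong)
qed simp

text \<open>Modulo the minor forms \<open>x\<^sub>k \<equiv> (p\<^sub>k / p\<^sub>z) x\<^sub>z\<close>, so a monomial of degree \<open>d\<close> is congruent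
  to its value at \<open>p\<close> times \<open>x\<^sub>z\<^sup>d / p\<^sub>z\<^sup>d\<close>.\<close>

lemma single_minus_power_in_minor_ideal:
  fixes p :: "nat \<Rightarrow> 'k::field"
  assumes p: "p z \<noteq> 0" and z: "z < n" and m: "Poly_Mapping.keys m \<subseteq> {..<n}"
  shows "Poly_Mapping.single m c
           - Poly_Mapping.single (Poly_Mapping.single z (mdeg m)) (c * mon_eval m p / p z ^ mdeg m)
         \<in> minor_ideal n p z"
  using m
proof (induction "mdeg m" arbitrary: m c)
  case 0
  then show ?case
    using mdeg_eq_0_iff[of m] by simp
next
  case (Suc d)
  then have "m \<noteq> 0"
    by auto
  then obtain k where k: "k \<in> Poly_Mapping.keys m"
    by (metis keys_eq_empty ex_in_conv)
  then have k1: "Poly_Mapping.lookup m k \<ge> 1"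
    by (simp add: in_keys_iff)
  have kn: "k < n"
    using k Suc.prems by blast
  define m' where "m' = m - Poly_Mapping.single k 1"
  define \<alpha> where "\<alpha> = c * mon_eval m' p / p z ^ d"
  let ?x_k = "Poly_Mapping.single (Poly_Mapping.single k 1) (1::'k)"
  let ?z_pow = "\<lambda>e a. Poly_Mapping.single (Poly_Mapping.single z e) a"
  have d: "d = mdeg m'"
    using mdeg_minus_single[OF k1] Suc.hyps(2) by (simp add: m'_def)
  have "Poly_Mapping.keys m' \<subseteq> Poly_Mapping.keys m"
    by (auto simp: m'_def in_keys_iff lookup_minus)
  then have IH: "Poly_Mapping.single m' c - ?z_pow d \<alpha> \<in> minor_ideal n p z"
    using Suc.hyps(1)[OF d, of c] Suc.prems d by (simp add: \<alpha>_def)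
  have m_eq: "Poly_Mapping.single m c = ?x_k * Poly_Mapping.single m' c"
    using minus_single_plus_single[OF k1] by (simp add: mult_single m'_def add.commute)
  have coeff_eq: "c * mon_eval m p / p z ^ Suc d = \<alpha> * p k / p z"
    using p mon_eval_minus_single[OF k1, of p] by (simp add: \<alpha>_def m'_def field_simps)
  have z_pow_Suc:
    "Poly_Mapping.single z d + Poly_Mapping.single z (Suc 0) = Poly_Mapping.single z (Suc d)"
    by (simp add: single_add[symmetric])
  have "?z_pow d (\<alpha> / p z) * minor_form p z k
      = ?z_pow d (\<alpha> / p z) * Poly_Mapping.single (Poly_Mapping.single k 1) (p z)
        - ?z_pow d (\<alpha> / p z) * Poly_Mapping.single (Poly_Mapping.single z 1) (p k)"
    by (simp add: minor_form_def right_diff_distrib)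
  also have "\<dots> = ?x_k * ?z_pow d \<alpha> - ?z_pow (Suc d) (\<alpha> * p k / p z)"
    using p by (simp add: mult_single z_pow_Suc add.commute)
  finally have "Poly_Mapping.single m c - ?z_pow (Suc d) (c * mon_eval m p / p z ^ Suc d)
      = ?x_k * (Poly_Mapping.single m' c - ?z_pow d \<alpha>) + ?z_pow d (\<alpha> / p z) * minor_form p z k"
    unfolding m_eq coeff_eq by (simp add: algebra_simps)
  also have "\<dots> \<in> minor_ideal n p z"
    using IH kn z
    by (intro minor_ideal_add minor_ideal_mult minor_form_in_minor_ideal polys_single) auto
  finally show ?case
    using Suc.hyps(2) by simp
qed

lemma homog_minus_power_in_minor_ideal:
  fixes p :: "nat \<Rightarrow> 'k::field"
  assumes p: "p z \<noteq> 0" and z: "z < n" and f: "f \<in> polys n" "homog q f"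
  shows "f - Poly_Mapping.single (Poly_Mapping.single z (nat q)) (peval f p / p z ^ nat q)
         \<in> minor_ideal n p z"
proof -
  let ?z_pow = "\<lambda>a. Poly_Mapping.single (Poly_Mapping.single z (nat q)) a"
  let ?c = "\<lambda>m. Poly_Mapping.lookup f m * mon_eval m p / p z ^ nat q"
  have sum_z_pow: "(\<Sum>m\<in>S. ?z_pow (a m)) = ?z_pow (\<Sum>m\<in>S. a m)" for S and a :: "_ \<Rightarrow> 'k"
    by (induction S rule: infinite_finite_induct) (simp_all add: single_add)
  have "f - ?z_pow (peval f p / p z ^ nat q)
      = (\<Sum>m\<in>Poly_Mapping.keys f.
           Poly_Mapping.single m (Poly_Mapping.lookup f m) - ?z_pow (?c m))"
    by (simp add: sum_subtractf sum_z_pow sum_single_lookup peval_conv_mon_eval sum_divide_distrib)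
  also have "\<dots> \<in> minor_ideal n p z"
  proof (intro minor_ideal_sum)
    fix m
    assume "m \<in> Poly_Mapping.keys f"
    then have "Poly_Mapping.keys m \<subseteq> {..<n}" "nat q = mdeg m"
      using f by (auto simp: polys_def homog_def)
    then show "Poly_Mapping.single m (Poly_Mapping.lookup f m) - ?z_pow (?c m) \<in> minor_ideal n p z"
      using single_minus_power_in_minor_ideal[of p z n m] p z by simp
  qed
  finally show ?thesis .
qed

lemma peval_pderiv_var_minor_ideal:
  assumes "g = (\<Sum>k<n. b k * minor_form p z k)"
  shows "peval (pderiv_var j g) p
           = (\<Sum>k<n. peval (b k) p * peval (pderiv_var j (minor_form p z k)) p)"
  by (simp add: assms pderiv_var_sum peval_sum peval_pderiv_var_mult peval_minor_form mult.commute)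

lemma cone_ideal_polys: "f \<in> cone_ideal n r P \<Longrightarrow> f \<in> polys n"
  by (simp add: cone_ideal_def)

lemma cone_ideal_vanishes:
  assumes "f \<in> cone_ideal n r P" "i < r"
  shows "peval f (P i) = 0"
proof -
  have "peval f (\<lambda>j. 1 * P i j) = 0"
    using assms unfolding cone_ideal_def by blast
  then show ?thesis
    by simp
qed

lemma cone_ideal_zero [simp]: "0 \<in> cone_ideal n r P"
  by (simp add: cone_ideal_def)

lemma cone_ideal_add: "f \<in> cone_ideal n r P \<Longrightarrow> g \<in> cone_ideal n r P \<Longrightarrow> f + g \<in> cone_ideal n r P"
  by (simp add: cone_ideal_def polys_add peval_add)

lemma cone_ideal_diff: "f \<in> cone_ideal n r P \<Longrightarrow> g \<in> cone_ideal n r P \<Longrightarrow> f - g \<in> cone_ideal n r P"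
  by (simp add: cone_ideal_def polys_diff peval_diff)

lemma cone_ideal_mult: "h \<in> polys n \<Longrightarrow> f \<in> cone_ideal n r P \<Longrightarrow> h * f \<in> cone_ideal n r P"
  by (simp add: cone_ideal_def polys_mult peval_mult)

lemma cone_ideal_sum:
  "(\<And>a. a \<in> A \<Longrightarrow> F a \<in> cone_ideal n r P) \<Longrightarrow> (\<Sum>a\<in>A. F a) \<in> cone_ideal n r P"
  by (induction A rule: infinite_finite_induct) (auto intro: cone_ideal_add)

lemma homog_in_cone_ideal:
  assumes "f \<in> polys n" "homog q f" "\<And>i. i < r \<Longrightarrow> peval f (P i) = 0"
  shows "f \<in> cone_ideal n r P"
  using assms by (simp add: cone_ideal_def peval_homog_scale)

lemma power_sum_eq_0_imp_coeff_eq_0: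
  fixes a :: "nat \<Rightarrow> 'k::{idom, ring_char_0}"
  assumes "finite E" "\<And>t. (\<Sum>e\<in>E. t ^ e * a e) = 0" "e \<in> E"
  shows "a e = 0"
proof -
  define p where "p = (\<Sum>e\<in>E. monom (a e) e)"
  have "\<forall>t. poly p t = 0"
    using assms(2) by (simp add: p_def poly_sum poly_monom mult.commute)
  then have "p = 0"
    using poly_all_0_iff_0 by blast
  moreover have "coeff p e = a e"
    using assms(1,3) by (simp add: p_def coeff_sum coeff_monom sum.delta)
  ultimately show ?thesis
    by simp
qed

text \<open>On the line through \<open>P i\<close>, the homogeneous components of \<open>f\<close> are the coefficients of a
  polynomial in the parameter of the line.\<close>

lemma cone_ideal_hcomp:
  fixes P :: "nat \<Rightarrow> nat \<Rightarrow> 'k::{idom, ring_char_0}"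
  assumes f: "f \<in> cone_ideal n r P"
  shows "hcomp e f \<in> cone_ideal n r P"
proof (rule homog_in_cone_ideal[OF hcomp_polys[OF cone_ideal_polys[OF f]] homog_hcomp])
  fix i
  assume i: "i < r"
  show "peval (hcomp e f) (P i) = 0"
  proof (cases "e \<in> mdeg ` Poly_Mapping.keys f")
    case True
    have "(\<Sum>e\<in>mdeg ` Poly_Mapping.keys f. t ^ e * peval (hcomp e f) (P i)) = 0" for t
      using f i peval_scale_eq_sum_hcomp[of f t "P i"] by (simp add: cone_ideal_def)
    then show ?thesis
      by (rule power_sum_eq_0_imp_coeff_eq_0[OF finite_imageI[OF finite_keys] _ True])
  next
    case False
    then have "hcomp e f = 0"
      by (intro poly_mapping_eqI) (auto simp: lookup_hcomp in_keys_iff)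
    then show ?thesis
      by simp
  qed
qed

lemma exists_separating_linear_form:
  fixes P :: "nat \<Rightarrow> nat \<Rightarrow> 'k::field"
  assumes proj: "proj_points n r P" and i: "i < r" "i' < r" "i \<noteq> i'"
  shows "\<exists>L\<in>polys n. peval L (P i) \<noteq> 0 \<and> (\<forall>t. peval L (\<lambda>j. t * P i' j) = 0)"
proof -
  obtain a where a: "a < n" "P i' a \<noteq> 0"
    using proj i by (auto simp: proj_points_def)
  obtain b where b: "b < n" "P i b \<noteq> P i a / P i' a * P i' b"
    using proj i unfolding proj_points_def by blast
  define L :: "'k mpoly" where "L = minor_form (P i') a b"
  have "peval L (P i) \<noteq> 0"
    using a b by (auto simp: L_def peval_minor_form field_simps)
  moreover have "L \<in> polys n"
    using a b by (simp add: L_def minor_form_polys)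
  moreover have "peval L (\<lambda>j. t * P i' j) = 0" for t
    by (simp add: L_def peval_minor_form algebra_simps)
  ultimately show ?thesis
    by blast
qed

lemma exists_separating_poly:
  fixes P :: "nat \<Rightarrow> nat \<Rightarrow> 'k::field"
  assumes proj: "proj_points n r P" and i: "i < r"
  shows "\<exists>u\<in>polys n. peval u (P i) \<noteq> 0
                    \<and> (\<forall>i'<r. i' \<noteq> i \<longrightarrow> (\<forall>t. peval u (\<lambda>j. t * P i' j) = 0))"
proof -
  obtain L where L: "\<And>i'. i' \<in> {..<r} - {i} \<Longrightarrow>
      L i' \<in> polys n \<and> peval (L i') (P i) \<noteq> 0 \<and> (\<forall>t. peval (L i') (\<lambda>j. t * P i' j) = 0)"
    using exists_separating_linear_form[OF proj i] by (metis Diff_iff insert_iff lessThan_iff)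
  define u where "u = (\<Prod>i'\<in>{..<r} - {i}. L i')"
  have "u \<in> polys n"
    unfolding u_def using L by (intro polys_prod) auto
  moreover have "peval u (P i) \<noteq> 0"
    unfolding u_def peval_prod using L by simp
  moreover have "peval u (\<lambda>j. t * P i' j) = 0" if "i' < r" "i' \<noteq> i" for i' t
    unfolding u_def peval_prod using L that by (intro prod_zero) auto
  ultimately show ?thesis
    by blast
qed

section \<open>Graded homomorphisms are derivations at each point\<close>

lemma graded_hom_add:
  "graded_hom n I l \<phi> \<Longrightarrow> f \<in> I \<Longrightarrow> g \<in> I \<Longrightarrow> \<phi> (f + g) - (\<phi> f + \<phi> g) \<in> I"
  by (simp add: graded_hom_def)

lemma graded_hom_mult:
  "graded_hom n I l \<phi> \<Longrightarrow> h \<in> polys n \<Longrightarrow> f \<in> I \<Longrightarrow> \<phi> (h * f) - h * \<phi> f \<in> I"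
  by (simp add: graded_hom_def)

lemma graded_hom_homog:
  "graded_hom n I l \<phi> \<Longrightarrow> f \<in> I \<Longrightarrow> homog q f \<Longrightarrow> \<exists>g\<in>polys n. homog (q + l) g \<and> \<phi> f - g \<in> I"
  by (simp add: graded_hom_def)

context
  fixes n r :: nat and P :: "nat \<Rightarrow> nat \<Rightarrow> 'k::comm_ring_1" and l :: int and \<phi>
  assumes \<phi>: "graded_hom n (cone_ideal n r P) l \<phi>"
begin

lemma graded_hom_zero: "\<phi> 0 \<in> cone_ideal n r P"
proof -
  have "\<phi> (0 + 0) - (\<phi> 0 + \<phi> 0) \<in> cone_ideal n r P"
    by (rule graded_hom_add[OF \<phi>]) simp_all
  then have "0 - (- \<phi> 0) \<in> cone_ideal n r P"
    by (intro cone_ideal_diff) simp_all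
  then show ?thesis
    by simp
qed

lemma graded_hom_sum:
  assumes "finite A" "\<And>a. a \<in> A \<Longrightarrow> F a \<in> cone_ideal n r P"
  shows "\<phi> (\<Sum>a\<in>A. F a) - (\<Sum>a\<in>A. \<phi> (F a)) \<in> cone_ideal n r P"
  using assms
proof (induction A rule: finite_induct)
  case empty
  then show ?case
    using graded_hom_zero by simp
next
  case (insert x A)
  have "(\<Sum>a\<in>A. F a) \<in> cone_ideal n r P"
    using insert by (auto intro: cone_ideal_sum)
  then have "\<phi> (F x + (\<Sum>a\<in>A. F a)) - (\<phi> (F x) + \<phi> (\<Sum>a\<in>A. F a)) \<in> cone_ideal n r P"
    using graded_hom_add[OF \<phi>] insert by simp
  from cone_ideal_add[OF this insert.IH] insert show ?case
    by (simp add: algebra_simps)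
qed

lemma graded_hom_eval_mult:
  assumes "h \<in> polys n" "f \<in> cone_ideal n r P" "i < r"
  shows "peval (\<phi> (h * f)) (P i) = peval h (P i) * peval (\<phi> f) (P i)"
  using cone_ideal_vanishes[OF graded_hom_mult[OF \<phi> assms(1,2)] assms(3)]
  by (simp add: peval_diff peval_mult)

lemma graded_hom_eval_sum:
  assumes "finite A" "\<And>a. a \<in> A \<Longrightarrow> F a \<in> cone_ideal n r P" "i < r"
  shows "peval (\<phi> (\<Sum>a\<in>A. F a)) (P i) = (\<Sum>a\<in>A. peval (\<phi> (F a)) (P i))"
  using cone_ideal_vanishes[OF graded_hom_sum[OF assms(1,2)] assms(3)]
  by (simp add: peval_diff peval_sum)

end

lemma minor_ideal_if_vanishing_homog:
  fixes p :: "nat \<Rightarrow> 'k::field"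
  assumes "p z \<noteq> 0" "z < n" "f \<in> polys n" "homog q f" "peval f p = 0"
  shows "f \<in> minor_ideal n p z"
  using homog_minus_power_in_minor_ideal[of p z n f q] assms by simp

lemma graded_hom_pointwise_derivation:
  fixes P :: "nat \<Rightarrow> nat \<Rightarrow> 'k::field"
  assumes proj: "proj_points n r P" and i: "i < r"
    and \<phi>: "graded_hom n (cone_ideal n r P) l \<phi>"
  shows "\<exists>v. \<forall>f\<in>cone_ideal n r P. \<forall>q. homog q f \<longrightarrow>
           peval (\<phi> f) (P i) = (\<Sum>j<n. v j * peval (pderiv_var j f) (P i))"
proof -
  let ?I = "cone_ideal n r P" and ?p = "P i"
  let ?L = "minor_form ?p"
  obtain z where z: "z < n" "?p z \<noteq> 0"
    using proj i by (auto simp: proj_points_def)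
  obtain u where u: "u \<in> polys n" "peval u ?p \<noteq> 0"
    and u_other: "\<forall>i'<r. i' \<noteq> i \<longrightarrow> (\<forall>t. peval u (\<lambda>j. t * P i' j) = 0)"
    using exists_separating_poly[OF proj i] by blast
  have uL: "u * ?L z k \<in> ?I" if "k < n" for k
    using u u_other that z
    by (auto simp: cone_ideal_def peval_mult peval_minor_form polys_mult minor_form_polys)
  define \<gamma> where "\<gamma> k = peval (\<phi> (u * ?L z k)) ?p" for k
  define v where "v j = (if j = z then 0 else \<gamma> j / (peval u ?p * ?p z))" for j
  have \<gamma>_z: "\<gamma> z = 0"
    using cone_ideal_vanishes[OF graded_hom_zero[OF \<phi>] i] by (simp add: \<gamma>_def)
  have v_L: "(\<Sum>j<n. v j * peval (pderiv_var j (?L z k)) ?p) = \<gamma> k / peval u ?p" if "k < n" for k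
  proof -
    have "(\<Sum>j<n. v j * peval (pderiv_var j (?L z k)) ?p)
        = (\<Sum>j<n. (if j = k then v j * ?p z else 0) - (if j = z then v j * ?p k else 0))"
      by (rule sum.cong) (auto simp: peval_pderiv_var_minor_form right_diff_distrib)
    also have "\<dots> = v k * ?p z - v z * ?p k"
      using that z by (simp add: sum_subtractf)
    finally show ?thesis
      using z \<gamma>_z by (cases "k = z") (simp_all add: v_def field_simps)
  qed
  show ?thesis
  proof (intro exI ballI allI impI)
    fix f q
    assume f: "f \<in> ?I" and "homog q f"
    then have "f \<in> minor_ideal n ?p z"
      using z i
      by (intro minor_ideal_if_vanishing_homog) (auto intro: cone_ideal_polys cone_ideal_vanishes)
    then obtain b where b: "\<forall>k<n. b k \<in> polys n" and f_eq: "f = (\<Sum>k<n. b k * ?L z k)"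
      by (auto simp: minor_ideal_def)
    have buL: "b k * (u * ?L z k) \<in> ?I" if "k < n" for k
      by (rule cone_ideal_mult[OF _ uL[OF that]]) (use b that in auto)
    have "peval u ?p * peval (\<phi> f) ?p = peval (\<phi> (\<Sum>k<n. b k * (u * ?L z k))) ?p"
      using graded_hom_eval_mult[OF \<phi> u(1) f i] f_eq
      by (simp add: sum_distrib_left mult.left_commute)
    also have "\<dots> = (\<Sum>k<n. peval (\<phi> (b k * (u * ?L z k))) ?p)"
      using buL by (intro graded_hom_eval_sum[OF \<phi> _ _ i]) auto
    also have "\<dots> = (\<Sum>k<n. peval (b k) ?p * \<gamma> k)"
    proof (rule sum.cong[OF refl])
      fix k
      assume "k \<in> {..<n}"
      then have "b k \<in> polys n" "u * ?L z k \<in> ?I"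
        using b uL by auto
      then show "peval (\<phi> (b k * (u * ?L z k))) ?p = peval (b k) ?p * \<gamma> k"
        unfolding \<gamma>_def by (rule graded_hom_eval_mult[OF \<phi> _ _ i])
    qed
    also have "\<dots> = peval u ?p
        * (\<Sum>k<n. peval (b k) ?p * (\<Sum>j<n. v j * peval (pderiv_var j (?L z k)) ?p))"
      using u(2) by (simp add: v_L sum_distrib_left)
    also have "\<dots> = peval u ?p * (\<Sum>j<n. v j * peval (pderiv_var j f) ?p)"
      unfolding peval_pderiv_var_minor_ideal[OF f_eq] sum_distrib_left
      by (subst sum.swap) (simp add: mult.left_commute)
    finally show "peval (\<phi> f) ?p = (\<Sum>j<n. v j * peval (pderiv_var j f) ?p)"
      using u(2) by simp
  qed
qed

definition forms_interpolate :: "nat \<Rightarrow> nat \<Rightarrow> (nat \<Rightarrow> nat \<Rightarrow> 'k::comm_ring_1) \<Rightarrow> int \<Rightarrow> bool" where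
  "forms_interpolate n r P q \<longleftrightarrow> (\<forall>w. \<exists>a\<in>polys n. homog q a \<and> (\<forall>i<r. peval a (P i) = w i))"

lemma forms_interpolate_if_K_deg_eq_O_deg:
  fixes P :: "nat \<Rightarrow> nat \<Rightarrow> 'k::comm_ring_1"
  assumes "K_deg r m = O_deg n r P m"
  shows "forms_interpolate n r P m"
  unfolding forms_interpolate_def
proof
  fix w :: "nat \<Rightarrow> 'k"
  have "(\<lambda>i e. if i < r \<and> e = m then w i else 0) \<in> K_deg r m"
    by (simp add: K_deg_def)
  then have "(\<lambda>i e. if i < r \<and> e = m then w i else 0) \<in> O_deg n r P m"
    by (simp only: assms)
  then have "(\<lambda>i e. if i < r \<and> e = m then w i else 0) \<in> embK r P ` polys n"
    by (simp add: O_deg_def)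
  then obtain F where F_w: "(\<lambda>i e. if i < r \<and> e = m then w i else 0) = embK r P F"
    and F: "F \<in> polys n"
    by (rule imageE)
  define a where "a = (if 0 \<le> m then hcomp (nat m) F else 0)"
  have "peval a (P i) = w i" if i: "i < r" for i
  proof -
    have "embK r P F i m = w i"
      using i by (simp flip: F_w)
    then show ?thesis
      using i by (cases "0 \<le> m") (simp_all add: embK_def a_def)
  qed
  moreover have "a \<in> polys n" "homog m a"
    using F homog_hcomp[of "nat m" F] by (auto simp: a_def hcomp_polys)
  ultimately show "\<exists>a\<in>polys n. homog m a \<and> (\<forall>i<r. peval a (P i) = w i)"
    by blast
qed

lemma K_deg_eq_O_deg_if_forms_interpolate:
  fixes P :: "nat \<Rightarrow> nat \<Rightarrow> 'k::comm_ring_1"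
  assumes "forms_interpolate n r P m"
  shows "K_deg r m = O_deg n r P m"
proof
  show "O_deg n r P m \<subseteq> K_deg r m"
    by (simp add: O_deg_def)
  show "K_deg r m \<subseteq> O_deg n r P m"
  proof
    fix c :: "nat \<Rightarrow> int \<Rightarrow> 'k"
    assume c: "c \<in> K_deg r m"
    obtain a where a: "a \<in> polys n" "homog m a" "\<And>i. i < r \<Longrightarrow> peval a (P i) = c i m"
      using assms unfolding forms_interpolate_def by (elim allE[of _ "\<lambda>i. c i m"]) blast
    have "embK r P a i e = c i e" for i e
    proof (cases "i < r \<and> e = m")
      case True
      show ?thesis
      proof (cases "0 \<le> m")
        case True
        then show ?thesis
          using \<open>i < r \<and> e = m\<close> a hcomp_homog[of "nat m" a] by (simp add: embK_def)
      next
        case False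
        then show ?thesis
          using \<open>i < r \<and> e = m\<close> a homog_neg_eq_0[of m a] by (simp add: embK_def)
      qed
    next
      case False
      then have "c i e = 0"
        using c by (auto simp: K_deg_def)
      moreover have "hcomp (nat e) a = 0" if "i < r" "0 \<le> e"
        using False that \<open>homog m a\<close> by (intro hcomp_homog_other[of m]) auto
      ultimately show ?thesis
        by (simp add: embK_def)
    qed
    then have "c = embK r P a"
      by (intro ext) simp
    then show "c \<in> O_deg n r P m"
      using a(1) c unfolding O_deg_def by blast
  qed
qed

lemma homog_sum_mult_pderiv_var:
  assumes "\<And>j. j < n \<Longrightarrow> homog (l + 1) (a j)" "homog q f"
  shows "homog (q + l) (\<Sum>j<n. a j * pderiv_var j f)"
  using homog_mult[OF assms(1) homog_pderiv_var[OF assms(2)]]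
  by (intro homog_sum) (simp add: add.commute)

lemma graded_hom_minus_derivation_homog:
  assumes \<phi>: "graded_hom n (cone_ideal n r P) l \<phi>"
    and a: "\<And>j. j < n \<Longrightarrow> a j \<in> polys n \<and> homog (l + 1) (a j)"
    and f: "f \<in> cone_ideal n r P" "homog q f"
    and at_points:
      "\<And>i. i < r \<Longrightarrow> peval (\<phi> f) (P i) = peval (\<Sum>j<n. a j * pderiv_var j f) (P i)"
  shows "\<phi> f - (\<Sum>j<n. a j * pderiv_var j f) \<in> cone_ideal n r P"
proof -
  let ?D = "\<Sum>j<n. a j * pderiv_var j f"
  obtain g where g: "g \<in> polys n" "homog (q + l) g" "\<phi> f - g \<in> cone_ideal n r P"
    using graded_hom_homog[OF \<phi> f] by blast
  have "g - ?D \<in> polys n"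
    using g(1) a cone_ideal_polys[OF f(1)]
    by (intro polys_diff polys_sum polys_mult pderiv_var_polys) auto
  moreover have "homog (q + l) (g - ?D)"
    using g(2) a f(2) by (intro homog_diff homog_sum_mult_pderiv_var) auto
  moreover have "peval (g - ?D) (P i) = 0" if "i < r" for i
    using cone_ideal_vanishes[OF g(3) that] at_points[OF that] by (simp add: peval_diff)
  ultimately have "g - ?D \<in> cone_ideal n r P"
    by (rule homog_in_cone_ideal)
  from cone_ideal_add[OF g(3) this] show ?thesis
    by simp
qed

lemma graded_hom_minus_derivation:
  fixes P :: "nat \<Rightarrow> nat \<Rightarrow> 'k::{idom, ring_char_0}"
  assumes \<phi>: "graded_hom n (cone_ideal n r P) l \<phi>"
    and homog_case: "\<And>f q. f \<in> cone_ideal n r P \<Longrightarrow> homog q f \<Longrightarrow>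
                       \<phi> f - (\<Sum>j<n. a j * pderiv_var j f) \<in> cone_ideal n r P"
    and f: "f \<in> cone_ideal n r P"
  shows "\<phi> f - (\<Sum>j<n. a j * pderiv_var j f) \<in> cone_ideal n r P"
proof -
  let ?E = "mdeg ` Poly_Mapping.keys f" and ?D = "\<lambda>g. \<Sum>j<n. a j * pderiv_var j g"
  have f_eq: "(\<Sum>e\<in>?E. hcomp e f) = f"
    by (rule sum_hcomp) simp_all
  have hcomp_I: "hcomp e f \<in> cone_ideal n r P" for e
    using cone_ideal_hcomp[OF f] .
  have "\<phi> f - (\<Sum>e\<in>?E. \<phi> (hcomp e f)) \<in> cone_ideal n r P"
    using graded_hom_sum[OF \<phi>, of ?E "\<lambda>e. hcomp e f"] hcomp_I f_eq by simp
  moreover have "(\<Sum>e\<in>?E. \<phi> (hcomp e f) - ?D (hcomp e f)) \<in> cone_ideal n r P"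
    using homog_case[OF hcomp_I homog_hcomp] by (intro cone_ideal_sum)
  moreover have "?D f = (\<Sum>e\<in>?E. ?D (hcomp e f))"
    by (subst (1) f_eq[symmetric]) (simp add: pderiv_var_sum sum_distrib_left sum.swap[of _ "{..<n}"])
  ultimately show ?thesis
    using cone_ideal_add by (fastforce simp: sum_subtractf)
qed

theorem T1_vanishes_if_forms_interpolate:
  fixes P :: "nat \<Rightarrow> nat \<Rightarrow> 'k::field_char_0"
  assumes proj: "proj_points n r P" and interp: "forms_interpolate n r P (l + 1)"
  shows "T1_vanishes n (cone_ideal n r P) l"
  unfolding T1_vanishes_def derivation_hom_def
proof (intro allI impI)
  fix \<phi>
  assume \<phi>: "graded_hom n (cone_ideal n r P) l \<phi>"
  obtain V where V: "\<And>i f q. i < r \<Longrightarrow> f \<in> cone_ideal n r P \<Longrightarrow> homog q f \<Longrightarrow>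
      peval (\<phi> f) (P i) = (\<Sum>j<n. V i j * peval (pderiv_var j f) (P i))"
    using graded_hom_pointwise_derivation[OF proj _ \<phi>] by metis
  have "\<exists>b\<in>polys n. homog (l + 1) b \<and> (\<forall>i<r. peval b (P i) = V i j)" for j
    using interp unfolding forms_interpolate_def by (elim allE[of _ "\<lambda>i. V i j"])
  then obtain a where a: "\<And>j. a j \<in> polys n \<and> homog (l + 1) (a j)"
    and a_V: "\<And>i j. i < r \<Longrightarrow> peval (a j) (P i) = V i j"
    by metis
  have "\<phi> f - (\<Sum>j<n. a j * pderiv_var j f) \<in> cone_ideal n r P" if "f \<in> cone_ideal n r P" for f
  proof (rule graded_hom_minus_derivation[OF \<phi> _ that])
    fix g q
    assume g: "g \<in> cone_ideal n r P" "homog q g"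
    show "\<phi> g - (\<Sum>j<n. a j * pderiv_var j g) \<in> cone_ideal n r P"
      using a g V a_V
      by (intro graded_hom_minus_derivation_homog[OF \<phi>]) (simp_all add: peval_sum peval_mult)
  qed
  then show "\<exists>a. (\<forall>j<n. a j \<in> polys n \<and> homog (l + 1) (a j))
               \<and> (\<forall>f\<in>cone_ideal n r P. \<phi> f - (\<Sum>j<n. a j * pderiv_var j f) \<in> cone_ideal n r P)"
    using a by blast
qed

section \<open>Interpolation at points in general position\<close>

interpretation fun_space: vector_space "\<lambda>c (v :: nat \<Rightarrow> 'k::field) i. c * v i"
  by unfold_locales (auto simp: algebra_simps)

lemma sum_fun_apply: "(\<Sum>a\<in>A. f a) x = (\<Sum>a\<in>A. f a x)"
  by (induction A rule: infinite_finite_induct) auto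

lemma supported_in_span_unit_vectors:
  fixes v :: "nat \<Rightarrow> 'k::field"
  assumes "\<forall>i\<ge>r. v i = 0"
  shows "v \<in> fun_space.span ((\<lambda>i j. if j = i then 1 else 0) ` {..<r})"
proof -
  have "v = (\<Sum>i<r. (\<lambda>j. v i * (if j = i then 1 else 0)))"
  proof
    fix x
    show "v x = (\<Sum>i<r. (\<lambda>j. v i * (if j = i then 1 else 0))) x"
      using assms by (auto simp: sum_fun_apply if_distrib sum.delta not_less cong: if_cong)
  qed
  also have "\<dots> \<in> fun_space.span ((\<lambda>i j. if j = i then 1 else 0) ` {..<r})"
    by (intro fun_space.span_sum fun_space.span_scale fun_space.span_base) auto
  finally show ?thesis .
qed

lemma subspace_contains_supported_if_dim_eq:
  fixes E :: "(nat \<Rightarrow> 'k::field) set"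
  assumes E: "fun_space.subspace E" and dim_E: "fun_space.dim E = r"
    and E_supported: "\<forall>v\<in>E. \<forall>i\<ge>r. v i = 0" and w: "\<forall>i\<ge>r. w i = 0"
  shows "w \<in> E"
proof (rule ccontr)
  assume "w \<notin> E"
  define U where "U = (\<lambda>i j. if j = i then 1 else (0::'k)) ` {..<r}"
  obtain B where B: "B \<subseteq> E" "fun_space.independent B" "E \<subseteq> fun_space.span B" "card B = r"
    using fun_space.basis_exists[of E] dim_E by blast
  have "w \<notin> fun_space.span B"
    using fun_space.span_minimal[OF B(1) E] \<open>w \<notin> E\<close> by blast
  then have "fun_space.independent (insert w B)"
    using fun_space.independent_insertI B(2) by blast
  moreover have "insert w B \<subseteq> fun_space.span U"
    using B(1) E_supported w supported_in_span_unit_vectors unfolding U_def by blast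
  ultimately have "finite (insert w B) \<and> card (insert w B) \<le> card U"
    by (intro fun_space.independent_span_bound) (simp_all add: U_def)
  moreover have "card U \<le> r"
    unfolding U_def using card_image_le[of "{..<r}"] by simp
  moreover have "w \<notin> B"
    using \<open>w \<notin> E\<close> B(1) by blast
  ultimately show False
    using B(4) by auto
qed

lemma eval_vectors_subspace: "fun_space.subspace (eval_vectors n r P l)"
proof (rule fun_space.subspaceI)
  show "0 \<in> eval_vectors n r P l"
    unfolding eval_vectors_def by (intro CollectI exI[of _ 0]) (simp add: fun_eq_iff)
next
  fix x y
  assume "x \<in> eval_vectors n r P l" "y \<in> eval_vectors n r P l"
  then obtain f g where "f \<in> polys n" "homog (int l) f" "x = (\<lambda>i. if i < r then peval f (P i) else 0)"
    and "g \<in> polys n" "homog (int l) g" "y = (\<lambda>i. if i < r then peval g (P i) else 0)"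
    unfolding eval_vectors_def by blast
  then show "x + y \<in> eval_vectors n r P l"
    unfolding eval_vectors_def
    by (intro CollectI exI[of _ "f + g"]) (simp add: fun_eq_iff peval_add polys_add homog_add)
next
  fix c x
  assume "x \<in> eval_vectors n r P l"
  then obtain f where "f \<in> polys n" "homog (int l) f" "x = (\<lambda>i. if i < r then peval f (P i) else 0)"
    unfolding eval_vectors_def by blast
  moreover have "homog (int l) (Poly_Mapping.single 0 c * f)"
    using homog_mult[OF homog_single[of 0 c] \<open>homog (int l) f\<close>] by simp
  ultimately show "(\<lambda>i. c * x i) \<in> eval_vectors n r P l"
    unfolding eval_vectors_def
    by (intro CollectI exI[of _ "Poly_Mapping.single 0 c * f"])
       (simp add: fun_eq_iff peval_mult peval_single polys_mult polys_single)
qed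

lemma binomial_mono_degree:
  assumes "n \<ge> 1" "d \<le> L"
  shows "(n + d - 1) choose d \<le> (n + L - 1) choose L"
  using assms(2)
proof (induction L rule: dec_induct)
  case (step L)
  have "n + Suc L - 1 = Suc (n + L - 1)"
    using assms(1) by simp
  then have "(n + Suc L - 1) choose Suc L = ((n + L - 1) choose L) + ((n + L - 1) choose Suc L)"
    by (simp only: binomial_Suc_Suc)
  then show ?case
    using step by simp
qed simp

lemma forms_interpolate_if_general_position:
  fixes P :: "nat \<Rightarrow> nat \<Rightarrow> 'k::field"
  assumes n: "n \<ge> 1" and gp: "general_position n r P"
    and r: "r \<le> (n + d - 1) choose d" and L: "d \<le> L"
  shows "forms_interpolate n r P (int L)"
  unfolding forms_interpolate_def
proof
  fix w :: "nat \<Rightarrow> 'k"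
  show "\<exists>a\<in>polys n. homog (int L) a \<and> (\<forall>i<r. peval a (P i) = w i)"
  proof (cases "L = 0")
    case True
    \<comment> \<open>general position says nothing in degree \<open>0\<close>, but here \<open>r \<le> 1\<close>\<close>
    then have "\<forall>i<r. i = 0"
      using r L by auto
    moreover have "homog (int L) (Poly_Mapping.single 0 (w 0))"
      using True homog_single[of 0 "w 0"] by simp
    ultimately show ?thesis
      by (intro bexI[of _ "Poly_Mapping.single 0 (w 0)"]) (auto simp: peval_single polys_single)
  next
    case False
    have "fun_space.dim (eval_vectors n r P L) = r"
      using gp False binomial_mono_degree[OF n L] r
      by (simp add: general_position_def conditions_imposed_def min_absorb1)
    then have "(\<lambda>i. if i < r then w i else 0) \<in> eval_vectors n r P L"
      by (rule subspace_contains_supported_if_dim_eq[OF eval_vectors_subspace])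
         (auto simp: eval_vectors_def)
    then obtain a where "a \<in> polys n" "homog (int L) a"
      and "(\<lambda>i. if i < r then w i else 0) = (\<lambda>i. if i < r then peval a (P i) else 0)"
      unfolding eval_vectors_def by blast
    then show ?thesis
      by (metis (mono_tags, lifting))
  qed
qed

theorem mainTheorem2:
  fixes n r :: nat and P :: "nat \<Rightarrow> nat \<Rightarrow> 'k::{alg_closed_field, field_char_0}"
  assumes "n \<ge> 1" and "proj_points n r P"
  shows "(\<forall>l::int. K_deg r (l + 1) = O_deg n r P (l + 1)
                    \<longrightarrow> T1_vanishes n (cone_ideal n r P) l)
     \<and> (\<forall>d::nat. general_position n r P \<longrightarrow>
          (if d = 0 then 0 else (n + d - 2) choose (d - 1)) < r \<longrightarrow>
          r \<le> (n + d - 1) choose d \<longrightarrow>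
          (\<forall>l::int. l \<ge> int d - 1 \<longrightarrow> T1_vanishes n (cone_ideal n r P) l))"
proof -
  have T1_vanishes_if_K_eq_O: "T1_vanishes n (cone_ideal n r P) l"
    if "K_deg r (l + 1) = O_deg n r P (l + 1)" for l
    using T1_vanishes_if_forms_interpolate[OF assms(2)] forms_interpolate_if_K_deg_eq_O_deg that .
  have "K_deg r (l + 1) = O_deg n r P (l + 1)"
    if "general_position n r P" "r \<le> (n + d - 1) choose d" "l \<ge> int d - 1" for d l
  proof -
    have "l + 1 = int (nat (l + 1))" "d \<le> nat (l + 1)"
      using that(3) by auto
    then show ?thesis
      using forms_interpolate_if_general_position[OF assms(1) that(1,2)]
      by (metis K_deg_eq_O_deg_if_forms_interpolate)
  qed
  then show ?thesis
    using T1_vanishes_if_K_eq_O by blast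
qed

end
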